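(* Let $G=(V,E)$ be a finite simple graph with $n=|V|$ vertices, and let $\mathbf{L}=\mathbf{D}-\mathbf{A}\in\mathbb{R}^{n\times n}$ be its graph Laplacian. Let $\phi_1,\dots,\phi_n$ be an orthonormal basis of $\mathbb{R}^n$ consisting of eigenvectors of $\mathbf{L}$, with $\mathbf{L}\phi_i=\lambda_i\phi_i$ and $0\le\lambda_1\le\cdots\le\lambda_n$. Let $T>0$, $\varepsilon\in(0,1)$, $M_\varepsilon>0$, and set $\Theta(\varepsilon)=\{i\in\{1,\dots,n\}:\lambda_i\le M_\varepsilon\}$. Let $U_T,U_T^\varepsilon\in\mathbb{R}^n$ satisfy $\|U_T-U_T^\varepsilon\|\le\varepsilon$. Let $$U(t)=\sum_{i=1}^n e^{\lambda_i(T-t)}\langle U_T,\phi_i\rangle\,\phi_i\quad(t\in[0,T])$$ be the solution of $\frac{dU}{dt}(t)+\mathbf{L}U(t)=0$ with $U(T)=U_T$, and define $$\mathbf{P}^{\varepsilon}U^\varepsilon(t)=\sum_{i\in\Theta(\varepsilon)}e^{\lambda_i(T-t)}\langle U_T^\varepsilon,\phi_i\rangle\,\phi_i .$$ Then for every $t\in[0,T]$, $$\|U(t)-\mathbf{P}^{\varepsilon}U^\varepsilon(t)\|\le M_\varepsilon^{-1}\Big\|\frac{d}{dt}U(t)\Big\|+e^{M_\varepsilon(T-t)}\varepsilon .$$ Furthermore, if $M_\varepsilon=\frac{1}{T}\ln(\varepsilon^{-\gamma})$ with $\gamma\in(0,1)$, then for every $t\in[0,T]$, $$\|U(t)-\mathbf{P}^{\varepsilon}U^\varepsilon(t)\|\le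 \frac{T}{\ln(\varepsilon^{-\gamma})}\Big\|\frac{d}{dt}U(t)\Big\|+\varepsilon^{1-\gamma\left(1-\frac{t}{T}\right)}.$$
   Context: $\mathbf{A}$ is the adjacency matrix ($A_{ij}=1$ if $\{x_i,x_j\}\in E$, else $0$), $\mathbf{D}$ is the diagonal degree matrix with $D_{ii}=\sum_j A_{ij}$. $\langle A,B\rangle=A^{\mathrm T}B$ is the standard inner product on $\mathbb{R}^n$ and $\|\cdot\|$ the Euclidean norm. $\mathbf{P}^\varepsilon U^\varepsilon(t)$ is the cut-off (truncated spectral) regularized approximation of $U(t)$ computed from noisy terminal data $U_T^\varepsilon$; $M_\varepsilon$ is the regularization parameter. *)

theory Defs
  imports "HOL-Analysis.Analysis"
begin

definition simple_graph :: "('n \<Rightarrow> 'n \<Rightarrow> bool) \<Rightarrow> bool" where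
  "simple_graph E \<longleftrightarrow> (\<forall>x y. E x y \<longrightarrow> E y x) \<and> (\<forall>x. \<not> E x x)"

definition adj_matrix :: "('n::finite \<Rightarrow> 'n \<Rightarrow> bool) \<Rightarrow> real^'n^'n" where
  "adj_matrix E = (\<chi> i j. if E i j then 1 else 0)"

definition deg_matrix :: "('n::finite \<Rightarrow> 'n \<Rightarrow> bool) \<Rightarrow> real^'n^'n" where
  "deg_matrix E = (\<chi> i j. if i = j then (\<Sum>k\<in>UNIV. adj_matrix E $ i $ k) else 0)"

definition laplacian :: "('n::finite \<Rightarrow> 'n \<Rightarrow> bool) \<Rightarrow> real^'n^'n" where
  "laplacian E = deg_matrix E - adj_matrix E"

definition heat_back :: "nat \<Rightarrow> (nat \<Rightarrow> real) \<Rightarrow> (nat \<Rightarrow> real^'n) \<Rightarrow> real \<Rightarrow> real^'n \<Rightarrow> real \<Rightarrow> real^'n" where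
  "heat_back n lam phi T UT t = (\<Sum>i\<in>{1..n}. (exp (lam i * (T - t)) * (UT \<bullet> phi i)) *\<^sub>R phi i)"

definition cutoff_approx :: "nat \<Rightarrow> (nat \<Rightarrow> real) \<Rightarrow> (nat \<Rightarrow> real^'n) \<Rightarrow> real \<Rightarrow> real \<Rightarrow> real^'n \<Rightarrow> real \<Rightarrow> real^'n" where
  "cutoff_approx n lam phi T M UTe t =
     (\<Sum>i\<in>{i\<in>{1..n}. lam i \<le> M}. (exp (lam i * (T - t)) * (UTe \<bullet> phi i)) *\<^sub>R phi i)"

end

theory Submission
  imports Defs
begin

text \<open>In the eigenbasis the error splits into two orthogonal pieces. The modes with
  \<open>\<lambda>\<^sub>i > M\<close> are dropped by the cut-off; since \<open>\<lambda>\<^sub>i/M > 1\<close> there, each of their coefficients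
  is bounded by \<open>M\<^sup>-\<^sup>1\<close> times the corresponding coefficient \<open>-\<lambda>\<^sub>i e\<^bsup>\<lambda>\<^sub>i(T-t)\<^esup>\<langle>U\<^sub>T,\<phi>\<^sub>i\<rangle>\<close> of
  \<open>dU/dt\<close>, so this piece has norm at most \<open>M\<^sup>-\<^sup>1 \<parallel>dU/dt\<parallel>\<close>. The kept modes carry the data
  error, amplified by at most \<open>e\<^bsup>M(T-t)\<^esup>\<close>, so by Bessel's inequality that piece has norm at
  most \<open>e\<^bsup>M(T-t)\<^esup>\<epsilon>\<close>. With \<open>M = T\<^sup>-\<^sup>1 ln \<epsilon>\<^sup>-\<^sup>\<gamma>\<close> the second bound becomes \<open>\<epsilon>\<^bsup>1-\<gamma>(1-t/T)\<^esup>\<close>.\<close>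

definition orthonormal_on :: "'i set \<Rightarrow> ('i \<Rightarrow> 'a::real_inner) \<Rightarrow> bool" where
  "orthonormal_on I phi \<longleftrightarrow> (\<forall>i\<in>I. \<forall>j\<in>I. phi i \<bullet> phi j = (if i = j then 1 else 0))"

lemma norm_sum_orthonormal_squared:
  assumes "orthonormal_on I phi" "finite S" "S \<subseteq> I"
  shows "(norm (\<Sum>i\<in>S. c i *\<^sub>R phi i))\<^sup>2 = (\<Sum>i\<in>S. (c i)\<^sup>2)"
proof -
  have "(norm (\<Sum>i\<in>S. c i *\<^sub>R phi i))\<^sup>2 = (\<Sum>j\<in>S. \<Sum>i\<in>S. c i * c j * (phi i \<bullet> phi j))"
    by (simp add: power2_norm_eq_inner inner_sum_left inner_sum_right sum_distrib_left mult_ac)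
  also have "\<dots> = (\<Sum>j\<in>S. \<Sum>i\<in>S. if i = j then c i * c j else 0)"
  proof -
    have "phi i \<bullet> phi j = (if i = j then 1 else 0)" if "i \<in> S" "j \<in> S" for i j
      using assms(1,3) that unfolding orthonormal_on_def by blast
    then show ?thesis by (intro sum.cong refl) simp
  qed
  also have "\<dots> = (\<Sum>i\<in>S. (c i)\<^sup>2)"
    using assms(2) by (simp add: power2_eq_square)
  finally show ?thesis .
qed

lemma norm_sum_orthonormal_le:
  assumes "orthonormal_on I phi" "finite R" "S \<subseteq> R" "R \<subseteq> I"
    and "\<And>i. i \<in> S \<Longrightarrow> \<bar>c i\<bar> \<le> \<bar>b i\<bar>"
  shows "norm (\<Sum>i\<in>S. c i *\<^sub>R phi i) \<le> norm (\<Sum>i\<in>R. b i *\<^sub>R phi i)"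
proof (rule power2_le_imp_le)
  have "finite S" "S \<subseteq> I"
    using assms(2,3,4) by (auto intro: rev_finite_subset)
  with assms(1) have "(norm (\<Sum>i\<in>S. c i *\<^sub>R phi i))\<^sup>2 = (\<Sum>i\<in>S. (c i)\<^sup>2)"
    by (rule norm_sum_orthonormal_squared)
  also have "\<dots> \<le> (\<Sum>i\<in>S. (b i)\<^sup>2)"
    using assms(5) by (intro sum_mono) (simp add: abs_le_square_iff)
  also have "\<dots> \<le> (\<Sum>i\<in>R. (b i)\<^sup>2)"
    using assms(2,3) by (intro sum_mono2) auto
  also have "\<dots> = (norm (\<Sum>i\<in>R. b i *\<^sub>R phi i))\<^sup>2"
    using assms(1,2,4) by (intro norm_sum_orthonormal_squared[symmetric])
  finally show "(norm (\<Sum>i\<in>S. c i *\<^sub>R phi i))\<^sup>2 \<le> (norm (\<Sum>i\<in>R. b i *\<^sub>R phi i))\<^sup>2" .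
qed simp

lemma norm_orthonormal_projection_le:
  assumes "orthonormal_on I phi" "finite S" "S \<subseteq> I"
  shows "norm (\<Sum>i\<in>S. (d \<bullet> phi i) *\<^sub>R phi i) \<le> norm d"
proof (rule power2_le_imp_le)
  define p where "p = (\<Sum>i\<in>S. (d \<bullet> phi i) *\<^sub>R phi i)"
  have "(norm p)\<^sup>2 = (\<Sum>i\<in>S. (d \<bullet> phi i)\<^sup>2)"
    unfolding p_def using assms by (rule norm_sum_orthonormal_squared)
  moreover have "d \<bullet> p = (\<Sum>i\<in>S. (d \<bullet> phi i)\<^sup>2)"
    unfolding p_def by (simp add: inner_sum_right power2_eq_square)
  moreover have "(norm (d - p))\<^sup>2 = (norm d)\<^sup>2 - 2 * (d \<bullet> p) + (norm p)\<^sup>2"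
    by (simp add: power2_norm_eq_inner inner_diff_left inner_diff_right inner_commute)
  ultimately show "(norm p)\<^sup>2 \<le> (norm d)\<^sup>2"
    using zero_le_power2[of "norm (d - p)"] by linarith
qed simp

lemma vector_derivative_heat_back:
  "vector_derivative (heat_back n lam phi T UT) (at t) =
     (\<Sum>i\<in>{1..n}. (- lam i * (exp (lam i * (T - t)) * (UT \<bullet> phi i))) *\<^sub>R phi i)"
proof (rule vector_derivative_at)
  show "(heat_back n lam phi T UT has_vector_derivative
          (\<Sum>i\<in>{1..n}. (- lam i * (exp (lam i * (T - t)) * (UT \<bullet> phi i))) *\<^sub>R phi i)) (at t)"
    unfolding heat_back_def
    by (rule has_vector_derivative_sum) (auto intro!: derivative_eq_intros)
qed

lemma heat_back_minus_cutoff_approx: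
  "heat_back n lam phi T UT t - cutoff_approx n lam phi T M UTe t =
     (\<Sum>i\<in>{i\<in>{1..n}. M < lam i}. (exp (lam i * (T - t)) * (UT \<bullet> phi i)) *\<^sub>R phi i)
     + (\<Sum>i\<in>{i\<in>{1..n}. lam i \<le> M}. (exp (lam i * (T - t)) * ((UT - UTe) \<bullet> phi i)) *\<^sub>R phi i)"
proof -
  have index_split: "{1..n} = {i\<in>{1..n}. M < lam i} \<union> {i\<in>{1..n}. lam i \<le> M}"
    by auto
  have "heat_back n lam phi T UT t =
          (\<Sum>i\<in>{i\<in>{1..n}. M < lam i}. (exp (lam i * (T - t)) * (UT \<bullet> phi i)) *\<^sub>R phi i)
          + (\<Sum>i\<in>{i\<in>{1..n}. lam i \<le> M}. (exp (lam i * (T - t)) * (UT \<bullet> phi i)) *\<^sub>R phi i)"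
    unfolding heat_back_def by (subst index_split, rule sum.union_disjoint) auto
  moreover have "(\<Sum>i\<in>{i\<in>{1..n}. lam i \<le> M}. (exp (lam i * (T - t)) * (UT \<bullet> phi i)) *\<^sub>R phi i)
      - cutoff_approx n lam phi T M UTe t
      = (\<Sum>i\<in>{i\<in>{1..n}. lam i \<le> M}. (exp (lam i * (T - t)) * ((UT - UTe) \<bullet> phi i)) *\<^sub>R phi i)"
    unfolding cutoff_approx_def sum_subtractf[symmetric]
    by (intro sum.cong refl) (simp add: inner_diff_left algebra_simps)
  ultimately show ?thesis
    by (simp add: algebra_simps)
qed

lemma cutoff_approx_error:
  fixes phi :: "nat \<Rightarrow> real^'n"
  assumes "orthonormal_on {1..n} phi" "M > 0" "t \<le> T" "norm (UT - UTe) \<le> eps"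
  shows "norm (heat_back n lam phi T UT t - cutoff_approx n lam phi T M UTe t)
           \<le> inverse M * norm (vector_derivative (heat_back n lam phi T UT) (at t))
             + exp (M * (T - t)) * eps"
proof -
  define a where "a i = exp (lam i * (T - t)) * (UT \<bullet> phi i)" for i
  have high: "norm (\<Sum>i\<in>{i\<in>{1..n}. M < lam i}. a i *\<^sub>R phi i)
                \<le> inverse M * norm (vector_derivative (heat_back n lam phi T UT) (at t))"
  proof -
    have "norm (\<Sum>i\<in>{i\<in>{1..n}. M < lam i}. a i *\<^sub>R phi i)
            \<le> norm (\<Sum>i\<in>{1..n}. (inverse M * (- lam i * a i)) *\<^sub>R phi i)"
    proof (rule norm_sum_orthonormal_le[OF assms(1)])
      fix i assume "i \<in> {i\<in>{1..n}. M < lam i}"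
      then have "lam i > 0" and "1 \<le> inverse M * lam i"
        using assms(2) by (simp_all add: field_simps)
      then show "\<bar>a i\<bar> \<le> \<bar>inverse M * (- lam i * a i)\<bar>"
        using assms(2) mult_right_mono[of 1 "inverse M * lam i" "\<bar>a i\<bar>"]
        by (simp add: abs_mult mult.assoc)
    qed auto
    also have "(\<Sum>i\<in>{1..n}. (inverse M * (- lam i * a i)) *\<^sub>R phi i)
                 = inverse M *\<^sub>R vector_derivative (heat_back n lam phi T UT) (at t)"
      by (simp add: vector_derivative_heat_back a_def scaleR_sum_right)
    finally show ?thesis
      using assms(2) by simp
  qed
  have low: "norm (\<Sum>i\<in>{i\<in>{1..n}. lam i \<le> M}. (exp (lam i * (T - t)) * ((UT - UTe) \<bullet> phi i)) *\<^sub>R phi i)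
               \<le> exp (M * (T - t)) * eps"
  proof -
    have "norm (\<Sum>i\<in>{i\<in>{1..n}. lam i \<le> M}. (exp (lam i * (T - t)) * ((UT - UTe) \<bullet> phi i)) *\<^sub>R phi i)
            \<le> norm (\<Sum>i\<in>{i\<in>{1..n}. lam i \<le> M}. (exp (M * (T - t)) * ((UT - UTe) \<bullet> phi i)) *\<^sub>R phi i)"
    proof (rule norm_sum_orthonormal_le[OF assms(1)])
      fix i assume "i \<in> {i\<in>{1..n}. lam i \<le> M}"
      then have "exp (lam i * (T - t)) \<le> exp (M * (T - t))"
        using assms(3) by (simp add: mult_right_mono)
      then show "\<bar>exp (lam i * (T - t)) * ((UT - UTe) \<bullet> phi i)\<bar>
                   \<le> \<bar>exp (M * (T - t)) * ((UT - UTe) \<bullet> phi i)\<bar>"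
        by (simp add: abs_mult mult_right_mono)
    qed auto
    also have "\<dots> = exp (M * (T - t)) * norm (\<Sum>i\<in>{i\<in>{1..n}. lam i \<le> M}. ((UT - UTe) \<bullet> phi i) *\<^sub>R phi i)"
      by (simp flip: scaleR_scaleR scaleR_sum_right)
    also have "\<dots> \<le> exp (M * (T - t)) * norm (UT - UTe)"
      using assms(1) by (intro mult_left_mono norm_orthonormal_projection_le) auto
    also have "\<dots> \<le> exp (M * (T - t)) * eps"
      using assms(4) by simp
    finally show ?thesis .
  qed
  show ?thesis
    unfolding heat_back_minus_cutoff_approx
    using norm_triangle_le[OF add_mono[OF high low]] by (simp add: a_def)
qed

lemma exp_cutoff_level_eq_powr:
  fixes eps T gamma t :: real
  assumes "eps > 0" "T > 0"
  shows "exp ((1 / T) * ln (eps powr (- gamma)) * (T - t)) * eps = eps powr (1 - gamma * (1 - t / T))"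
proof -
  have "(1 / T) * ln (eps powr (- gamma)) * (T - t) = (- gamma * (1 - t / T)) * ln eps"
    using assms by (simp add: ln_powr field_simps)
  then have "exp ((1 / T) * ln (eps powr (- gamma)) * (T - t)) * eps
               = eps powr (- gamma * (1 - t / T)) * eps powr 1"
    using assms(1) by (simp add: powr_def)
  also have "\<dots> = eps powr (1 - gamma * (1 - t / T))"
    by (simp only: powr_add[symmetric]) (simp add: algebra_simps)
  finally show ?thesis .
qed

theorem theorem4:
  fixes E :: "'n::finite \<Rightarrow> 'n \<Rightarrow> bool"
    and phi :: "nat \<Rightarrow> real^'n" and lam :: "nat \<Rightarrow> real"
    and T eps M gamma :: real and UT UTe :: "real^'n"
  assumes "simple_graph E"
    and orthonormal: "\<forall>i\<in>{1..CARD('n)}. \<forall>j\<in>{1..CARD('n)}. phi i \<bullet> phi j = (if i = j then 1 else 0)"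
    and eigen: "\<forall>i\<in>{1..CARD('n)}. laplacian E *v phi i = lam i *\<^sub>R phi i"
    and lam_nonneg: "0 \<le> lam 1"
    and lam_sorted: "\<forall>i j. 1 \<le> i \<longrightarrow> i \<le> j \<longrightarrow> j \<le> CARD('n) \<longrightarrow> lam i \<le> lam j"
    and "T > 0" and "0 < eps" and "eps < 1" and "M > 0"
    and "norm (UT - UTe) \<le> eps"
  shows "(\<forall>t\<in>{0..T}.
            norm (heat_back CARD('n) lam phi T UT t - cutoff_approx CARD('n) lam phi T M UTe t)
              \<le> inverse M * norm (vector_derivative (heat_back CARD('n) lam phi T UT) (at t))
                + exp (M * (T - t)) * eps)
       \<and> ((0 < gamma \<and> gamma < 1 \<and> M = (1 / T) * ln (eps powr (- gamma))) \<longrightarrow>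
          (\<forall>t\<in>{0..T}.
            norm (heat_back CARD('n) lam phi T UT t - cutoff_approx CARD('n) lam phi T M UTe t)
              \<le> T / ln (eps powr (- gamma)) * norm (vector_derivative (heat_back CARD('n) lam phi T UT) (at t))
                + eps powr (1 - gamma * (1 - t / T))))"
proof -
  txt \<open>Only orthonormality is used: \<open>heat_back\<close> is the spectral formula itself, so neither
    the eigenvector equations nor the ordering of the \<open>\<lambda>\<^sub>i\<close> enter the estimate.\<close>
  have error: "norm (heat_back CARD('n) lam phi T UT t - cutoff_approx CARD('n) lam phi T M UTe t)
                 \<le> inverse M * norm (vector_derivative (heat_back CARD('n) lam phi T UT) (at t))
                   + exp (M * (T - t)) * eps" if "t \<in> {0..T}" for t
    using orthonormal that assms(9,10)
    by (intro cutoff_approx_error) (auto simp: orthonormal_on_def)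
  moreover have "inverse M = T / ln (eps powr (- gamma))"
    and "exp (M * (T - t)) * eps = eps powr (1 - gamma * (1 - t / T))"
    if "M = (1 / T) * ln (eps powr (- gamma))" for t
    using that exp_cutoff_level_eq_powr[OF \<open>0 < eps\<close> \<open>T > 0\<close>] by simp_all
  ultimately show ?thesis
    by auto
qed

end
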